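(* Let $n\ge 1$, let $c\neq 0$ be a constant, and let $X$ be a random vector in $\mathbb{R}^n$ with $X\sim N(\mathbf{0},c^2\mathbf{I}_n)$. Define $\widehat{\ell}_1(X)=\ell_1(X)/\mathbb{E}(\ell_1(X))$ and $\widehat{\ell}_2(X)=\ell_2(X)/\mathbb{E}(\ell_2(X))$, where $\ell_1(X)=\|X\|_1$ and $\ell_2(X)=\|X\|_2$. Then $$\max\left\{\mathbf{Var}_X\!\left(\frac{\widehat{\ell}_2(X)}{\widehat{\ell}_1(X)}\right),\ \mathbf{Var}_X\!\left(\frac{\widehat{\ell}_1(X)}{\widehat{\ell}_2(X)}\right)\right\}\lesssim \frac{1}{n}.$$
   Context: $\mathbf{I}_n$ is the $n\times n$ identity matrix and $N(\mathbf{0},c^2\mathbf{I}_n)$ the centered isotropic Gaussian distribution. $\|\cdot\|_1$ and $\|\cdot\|_2$ are the $\ell_1$ and Euclidean norms. The symbol $A(n)\lesssim 1/n$ means that $A(n)$ is bounded above by a quantity of order $1/n$ (up to a multiplicative constant) as $n$ grows. *)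

theory Defs
  imports "HOL-Probability.Probability"
begin

text \<open>Law of X ~ N(0, c^2 I_n) on R^n, vectors represented as functions on {..<n}
  (product of n independent centred normals with standard deviation abs c).\<close>
definition gauss_vec :: "nat \<Rightarrow> real \<Rightarrow> (nat \<Rightarrow> real) measure" where
  "gauss_vec n c = PiM {..<n} (\<lambda>_. density lborel (normal_density 0 \<bar>c\<bar>))"

definition l1 :: "nat \<Rightarrow> (nat \<Rightarrow> real) \<Rightarrow> real" where
  "l1 n x = (\<Sum>i<n. \<bar>x i\<bar>)"

definition l2 :: "nat \<Rightarrow> (nat \<Rightarrow> real) \<Rightarrow> real" where
  "l2 n x = sqrt (\<Sum>i<n. (x i)\<^sup>2)"

definition expect :: "'a measure \<Rightarrow> ('a \<Rightarrow> real) \<Rightarrow> real" where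
  "expect M f = (\<integral>x. f x \<partial>M)"

definition var :: "'a measure \<Rightarrow> ('a \<Rightarrow> real) \<Rightarrow> real" where
  "var M f = (\<integral>x. (f x - expect M f)\<^sup>2 \<partial>M)"

definition l1_hat :: "nat \<Rightarrow> real \<Rightarrow> (nat \<Rightarrow> real) \<Rightarrow> real" where
  "l1_hat n c x = l1 n x / expect (gauss_vec n c) (l1 n)"

definition l2_hat :: "nat \<Rightarrow> real \<Rightarrow> (nat \<Rightarrow> real) \<Rightarrow> real" where
  "l2_hat n c x = l2 n x / expect (gauss_vec n c) (l2 n)"

end

theory Submission
  imports Defs
begin

(* The variance of a ratio is at most its mean square deviation from any constant.  Write
   l1 = n m (1 + u) and l2^2 = n c^2 (1 + w), where m = |c| sqrt (2 / pi) is the mean of |X_i|: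
   u and w are means of n centred i.i.d. variables, so their second and fourth moments are O(1/n)
   and O(1/n^2) (computed by induction over the coordinates).  As sqrt n m <= E l2 <= sqrt n |c|,
   both ratios are, up to bounded factors, quotients P / Q of nonnegative variables close to 1.
   Where Q >= 1/2 the squared deviation of P / Q from 1 is O((P - 1)^2 + (Q - 1)^2); on the event
   Q < 1/2 the quotient is still at most sqrt n, because l1 <= sqrt n l2, and that event is paid
   for by the fourth moments, since there (1 - Q)^4 >= 1/16. *)

lemma abs_power_le_one_plus_abs_power:
  fixes x :: real
  assumes "j \<le> k"
  shows "\<bar>x\<bar> ^ j \<le> 1 + \<bar>x\<bar> ^ k"
proof (cases "\<bar>x\<bar> \<le> 1")
  case True
  then have "\<bar>x\<bar> ^ j \<le> 1" by (simp add: power_le_one)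
  then show ?thesis by (simp add: add_increasing2)
next
  case False
  then have "\<bar>x\<bar> ^ j \<le> \<bar>x\<bar> ^ k" using assms by (intro power_increasing) auto
  then show ?thesis by simp
qed

lemma sum_power4_le:
  fixes f :: "'a \<Rightarrow> real"
  shows "(\<Sum>i\<in>I. f i) ^ 4 \<le> real (card I) ^ 3 * (\<Sum>i\<in>I. f i ^ 4)"
proof -
  have "(\<Sum>i\<in>I. f i) ^ 4 = ((\<Sum>i\<in>I. f i)\<^sup>2)\<^sup>2" by simp
  also have "\<dots> \<le> ((\<Sum>i\<in>I. (f i)\<^sup>2) * card I)\<^sup>2"
    by (intro power_mono sum_squared_le_sum_of_squares) simp
  also have "\<dots> = (\<Sum>i\<in>I. (f i)\<^sup>2)\<^sup>2 * (card I)\<^sup>2" by (simp add: power_mult_distrib)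
  also have "\<dots> \<le> ((\<Sum>i\<in>I. ((f i)\<^sup>2)\<^sup>2) * card I) * (card I)\<^sup>2"
    by (intro mult_right_mono sum_squared_le_sum_of_squares) simp
  also have "\<dots> = real (card I) ^ 3 * (\<Sum>i\<in>I. f i ^ 4)"
    by (simp add: power2_eq_square power3_eq_cube power4_eq_xxxx mult_ac)
  finally show ?thesis .
qed

lemma power4_diff_le:
  fixes u v :: real
  shows "(u - v) ^ 4 \<le> 8 * (u ^ 4 + v ^ 4)"
proof -
  have "2 * (u\<^sup>2 + v\<^sup>2) - (u - v)\<^sup>2 = (u + v)\<^sup>2" by (simp add: power2_eq_square algebra_simps)
  then have "(u - v)\<^sup>2 \<le> 2 * (u\<^sup>2 + v\<^sup>2)" using zero_le_power2[of "u + v"] by linarith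
  then have "((u - v)\<^sup>2)\<^sup>2 \<le> (2 * (u\<^sup>2 + v\<^sup>2))\<^sup>2" by (intro power_mono) auto
  also have "\<dots> = 4 * (u\<^sup>2 + v\<^sup>2)\<^sup>2" by (simp add: power2_eq_square algebra_simps)
  also have "2 * ((u\<^sup>2)\<^sup>2 + (v\<^sup>2)\<^sup>2) - (u\<^sup>2 + v\<^sup>2)\<^sup>2 = (u\<^sup>2 - v\<^sup>2)\<^sup>2"
    by (simp add: power2_eq_square algebra_simps)
  then have "(u\<^sup>2 + v\<^sup>2)\<^sup>2 \<le> 2 * ((u\<^sup>2)\<^sup>2 + (v\<^sup>2)\<^sup>2)" using zero_le_power2[of "u\<^sup>2 - v\<^sup>2"] by linarith
  finally show ?thesis by simp
qed

lemma abs_diff_one_le_abs_square_diff_one: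
  fixes q :: real
  assumes "0 \<le> q"
  shows "\<bar>q - 1\<bar> \<le> \<bar>q\<^sup>2 - 1\<bar>"
proof -
  have "q\<^sup>2 - 1 = (q - 1) * (q + 1)" by (simp add: power2_eq_square algebra_simps)
  then have "\<bar>q\<^sup>2 - 1\<bar> = \<bar>q - 1\<bar> * (q + 1)" using assms by (simp add: abs_mult)
  then show ?thesis using assms by (simp add: mult_le_cancel_left1)
qed

lemma quotient_sq_dev_le:
  fixes P Q B :: real
  assumes "0 \<le> P / Q" "P / Q \<le> B"
  shows "(P / Q - 1)\<^sup>2 \<le> 8 * (P - 1)\<^sup>2 + 8 * (Q - 1)\<^sup>2 + 16 * (B + 1)\<^sup>2 * (Q - 1) ^ 4"
proof (cases "Q \<ge> 1 / 2")
  case True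
  have "(P / Q - 1)\<^sup>2 = ((P - 1) - (Q - 1))\<^sup>2 / Q\<^sup>2"
    using True by (simp add: power_divide field_simps)
  also have "\<dots> \<le> ((P - 1) - (Q - 1))\<^sup>2 / (1 / 2)\<^sup>2"
    using True by (intro divide_left_mono power_mono) auto
  also have "\<dots> = 4 * ((P - 1) - (Q - 1))\<^sup>2" by (simp add: power_divide)
  also have "\<dots> \<le> 8 * (P - 1)\<^sup>2 + 8 * (Q - 1)\<^sup>2"
    using zero_le_power2[of "P + Q - 2"] by (simp add: power2_eq_square algebra_simps)
  finally show ?thesis by (simp add: add_increasing2)
next
  case False
  have "\<bar>P / Q - 1\<bar> \<le> B + 1" using assms by linarith
  then have "(P / Q - 1)\<^sup>2 \<le> (B + 1)\<^sup>2"
    by (metis abs_ge_zero power2_abs power_mono)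
  also have "\<dots> \<le> 16 * (B + 1)\<^sup>2 * (Q - 1) ^ 4"
  proof -
    have "(1 / 2) ^ 4 \<le> (1 - Q) ^ 4" using False by (intro power_mono) auto
    then have "1 \<le> 16 * (Q - 1) ^ 4" by (simp add: power4_eq_xxxx algebra_simps)
    then have "(B + 1)\<^sup>2 * 1 \<le> (B + 1)\<^sup>2 * (16 * (Q - 1) ^ 4)" by (intro mult_left_mono) auto
    then show ?thesis by (simp add: mult_ac)
  qed
  finally show ?thesis by (simp add: add_increasing)
qed

lemma divide_le_of_le_mult:
  fixes x y B :: real
  assumes "x \<le> B * y" "0 \<le> y" "0 \<le> B"
  shows "x / y \<le> B"
  using assms by (cases "y = 0") (auto simp: pos_divide_le_eq)

lemma quotient_pair_sq_dev_le:
  fixes P1 P2 N \<kappa> u w :: real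
  assumes N: "1 \<le> N" and \<kappa>: "1 \<le> \<kappa>" and P: "0 \<le> P1" "0 \<le> P2"
    and P1_le: "P1 \<le> \<kappa> * P2" and P2_le: "P2 \<le> sqrt N * P1"
    and u: "u = P1 - 1" and w: "w = P2\<^sup>2 - 1"
  defines "E \<equiv> 16 * (1 + \<kappa>)\<^sup>2 * (u\<^sup>2 + w\<^sup>2 + N * (u ^ 4 + w ^ 4))"
  shows "(P1 / P2 - 1)\<^sup>2 \<le> E" and "(P2 / P1 - 1)\<^sup>2 \<le> E"
proof -
  define A where "A = 16 * (1 + \<kappa>)\<^sup>2"
  have sN: "1 \<le> sqrt N" using N by simp
  have A: "64 \<le> A" using \<kappa> power_mono[of 2 "1 + \<kappa>" 2] by (simp add: A_def)
  have E: "E = A * (u\<^sup>2 + w\<^sup>2) + A * N * (u ^ 4 + w ^ 4)" by (simp add: E_def A_def algebra_simps)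
  have "\<bar>P2 - 1\<bar> \<le> \<bar>w\<bar>" using abs_diff_one_le_abs_square_diff_one[OF P(2)] w by simp
  then have P2_dev: "(P2 - 1)\<^sup>2 \<le> w\<^sup>2" "(P2 - 1) ^ 4 \<le> w ^ 4"
    by (metis abs_ge_zero power_even_abs_numeral even_numeral power_mono)+
  have sq: "8 * (u\<^sup>2 + w\<^sup>2) \<le> A * (u\<^sup>2 + w\<^sup>2)" using A by (intro mult_right_mono) auto
  have u4: "0 \<le> u ^ 4" and w4: "0 \<le> w ^ 4" by (simp_all add: zero_le_even_power)
  have "w ^ 4 \<le> N * w ^ 4" using N w4 by (simp add: mult_le_cancel_right1)
  also have "\<dots> \<le> N * (u ^ 4 + w ^ 4)" using N u4 by (intro mult_left_mono) auto
  finally have "w ^ 4 \<le> N * (u ^ 4 + w ^ 4)" .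
  then have quart_w: "A * w ^ 4 \<le> A * N * (u ^ 4 + w ^ 4)" using A by (simp add: mult.assoc)
  have "N * u ^ 4 \<le> N * (u ^ 4 + w ^ 4)" using N w4 by (intro mult_left_mono) auto
  then have quart_u: "A * N * u ^ 4 \<le> A * N * (u ^ 4 + w ^ 4)" using A by (simp add: mult.assoc)
  have "P1 / P2 \<le> \<kappa>" using divide_le_of_le_mult[OF P1_le P(2)] \<kappa> by simp
  then have "(P1 / P2 - 1)\<^sup>2 \<le> 8 * u\<^sup>2 + 8 * (P2 - 1)\<^sup>2 + 16 * (\<kappa> + 1)\<^sup>2 * (P2 - 1) ^ 4"
    using quotient_sq_dev_le[of P1 P2 \<kappa>] P u by simp
  also have "\<dots> \<le> 8 * (u\<^sup>2 + w\<^sup>2) + A * w ^ 4"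
  proof -
    have "A * (P2 - 1) ^ 4 \<le> A * w ^ 4" using P2_dev A by (intro mult_left_mono) auto
    then show ?thesis using P2_dev by (simp add: A_def add.commute)
  qed
  finally show "(P1 / P2 - 1)\<^sup>2 \<le> E" using sq quart_w E by linarith
  have "P2 / P1 \<le> sqrt N" using divide_le_of_le_mult[OF P2_le P(1)] N by simp
  then have "(P2 / P1 - 1)\<^sup>2 \<le> 8 * (P2 - 1)\<^sup>2 + 8 * u\<^sup>2 + 16 * (sqrt N + 1)\<^sup>2 * u ^ 4"
    using quotient_sq_dev_le[of P2 P1 "sqrt N"] P u by simp
  also have "\<dots> \<le> 8 * (u\<^sup>2 + w\<^sup>2) + A * N * u ^ 4"
  proof -
    have "(sqrt N + 1)\<^sup>2 \<le> (2 * sqrt N)\<^sup>2" using sN by (intro power_mono) auto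
    moreover have "(2 * sqrt N)\<^sup>2 = 4 * N" using N by (simp add: power_mult_distrib)
    moreover have "64 * N \<le> A * N" using A N by (intro mult_right_mono) auto
    ultimately have "16 * (sqrt N + 1)\<^sup>2 \<le> A * N" by linarith
    then have "16 * (sqrt N + 1)\<^sup>2 * u ^ 4 \<le> A * N * u ^ 4"
      by (intro mult_right_mono) (auto simp: zero_le_even_power)
    then show ?thesis using P2_dev unfolding distrib_left by linarith
  qed
  finally show "(P2 / P1 - 1)\<^sup>2 \<le> E" using sq quart_u E by linarith
qed

lemma norm_ratio_sq_dev_le:
  fixes L1 L2 N m \<sigma> b u w :: real
  assumes N: "1 \<le> N" and m: "0 < m" "m \<le> \<sigma>"
    and L: "0 \<le> L2" "L2 \<le> L1" "L1 \<le> sqrt N * L2"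
    and b: "sqrt N * m \<le> b" "b \<le> sqrt N * \<sigma>"
    and u: "u = L1 / (N * m) - 1" and w: "w = L2\<^sup>2 / (N * \<sigma>\<^sup>2) - 1"
  defines "E \<equiv> 16 * (1 + \<sigma> / m)\<^sup>2 * (u\<^sup>2 + w\<^sup>2 + N * (u ^ 4 + w ^ 4))"
  shows "((L1 / (N * m)) / (L2 / b) - b / (sqrt N * \<sigma>))\<^sup>2 \<le> E"
    and "((L2 / b) / (L1 / (N * m)) - sqrt N * \<sigma> / b)\<^sup>2 \<le> (\<sigma> / m)\<^sup>2 * E"
proof -
  define P1 where "P1 = L1 / (N * m)"
  define P2 where "P2 = L2 / (sqrt N * \<sigma>)"
  define \<beta> where "\<beta> = sqrt N * \<sigma> / b"
  have sN: "1 \<le> sqrt N" using N by simp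
  have \<sigma>: "0 < \<sigma>" using m by linarith
  have b0: "0 < b" using b(1) sN m by (smt (verit) mult_pos_pos)
  have \<beta>: "1 \<le> \<beta>" "\<beta> \<le> \<sigma> / m"
    using b b0 m sN by (auto simp: \<beta>_def field_simps)
  have P: "0 \<le> P1" "0 \<le> P2" using L N m \<sigma> by (simp_all add: P1_def P2_def)
  have "P1 \<le> sqrt N * L2 / (N * m)" unfolding P1_def using L N m by (intro divide_right_mono) auto
  also have "\<dots> = \<sigma> / m * P2" using N \<sigma> m unfolding P2_def by (simp add: field_simps)
  finally have P1_le: "P1 \<le> \<sigma> / m * P2" .
  have "P2 \<le> L1 / (sqrt N * m)" unfolding P2_def using L N m sN by (intro frac_le mult_left_mono) auto
  also have "\<dots> = sqrt N * P1" using N m unfolding P1_def by (simp add: field_simps)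
  finally have P2_le: "P2 \<le> sqrt N * P1" .
  have w_P2: "w = P2\<^sup>2 - 1" using N \<sigma> by (simp add: w P2_def power_divide power_mult_distrib)
  note dev = quotient_pair_sq_dev_le[OF N _ P P1_le P2_le _ w_P2, of u, folded E_def]
  have L2_b: "L2 / b = P2 * \<beta>" using sN \<sigma> b0 by (simp add: P2_def \<beta>_def)
  have "(L1 / (N * m)) / (L2 / b) - b / (sqrt N * \<sigma>) = (P1 / P2 - 1) / \<beta>"
    unfolding L2_b P1_def[symmetric] by (simp add: \<beta>_def left_diff_distrib diff_divide_distrib)
  then have "((L1 / (N * m)) / (L2 / b) - b / (sqrt N * \<sigma>))\<^sup>2 = (P1 / P2 - 1)\<^sup>2 / \<beta>\<^sup>2"
    by (simp add: power_divide)
  also have "\<dots> \<le> (P1 / P2 - 1)\<^sup>2" using \<beta> by (simp add: divide_le_eq one_le_power mult_le_cancel_left1)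
  also have "\<dots> \<le> E" using dev(1) m by (simp add: P1_def u)
  finally show "((L1 / (N * m)) / (L2 / b) - b / (sqrt N * \<sigma>))\<^sup>2 \<le> E" .
  have "(L2 / b) / (L1 / (N * m)) - sqrt N * \<sigma> / b = \<beta> * (P2 / P1 - 1)"
    unfolding L2_b P1_def[symmetric] by (simp add: \<beta>_def right_diff_distrib)
  then have "((L2 / b) / (L1 / (N * m)) - sqrt N * \<sigma> / b)\<^sup>2 = \<beta>\<^sup>2 * (P2 / P1 - 1)\<^sup>2"
    by (simp add: power_mult_distrib)
  also have "\<dots> \<le> (\<sigma> / m)\<^sup>2 * E" using \<beta> dev(2) m by (intro mult_mono power_mono) (auto simp: P1_def u)
  finally show "((L2 / b) / (L1 / (N * m)) - sqrt N * \<sigma> / b)\<^sup>2 \<le> (\<sigma> / m)\<^sup>2 * E" .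
qed

lemma var_le_integral_of_sq_dev_le:
  fixes F D :: "'a \<Rightarrow> real"
  assumes M: "prob_space M" and F[measurable]: "F \<in> borel_measurable M" and D: "integrable M D"
    and dev: "\<And>x. x \<in> space M \<Longrightarrow> (F x - t)\<^sup>2 \<le> D x"
  shows "var M F \<le> (\<integral>x. D x \<partial>M)"
proof -
  interpret prob_space M by (rule M)
  define G where "G x = F x - t" for x
  have G_meas: "G \<in> borel_measurable M" unfolding G_def by measurable
  have G2: "integrable M (\<lambda>x. (G x)\<^sup>2)"
  proof (rule Bochner_Integration.integrable_bound[OF D])
    show "AE x in M. norm ((G x)\<^sup>2) \<le> norm (D x)"
      using dev by (intro AE_I2) (force simp: G_def intro: order_trans[OF _ abs_ge_self])
  qed (use G_meas in simp)
  have G1: "integrable M G" by (rule square_integrable_imp_integrable[OF G_meas G2])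
  have F_eq: "F x = G x + t" for x by (simp add: G_def)
  have "expectation F = expectation G + t" unfolding F_eq using G1 by (simp add: prob_space)
  then have "var M F = variance G" unfolding var_def expect_def by (simp add: F_eq)
  also have "\<dots> \<le> expectation (\<lambda>x. (G x)\<^sup>2)" using G1 G2 by (simp add: variance_eq)
  also have "\<dots> \<le> (\<integral>x. D x \<partial>M)" using G2 D dev by (intro integral_mono) (auto simp: G_def)
  finally show ?thesis .
qed

context
  fixes M :: "'a measure"
  assumes M: "prob_space M"
begin

lemma product_prob_space_const: "product_prob_space (\<lambda>_. M)"
  by (rule product_prob_spaceI) (rule M)

lemma measurable_coordinate:
  fixes n :: nat
  shows "i < n \<Longrightarrow> (\<lambda>x. x i) \<in> measurable (PiM {..<n} (\<lambda>_. M)) M"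
  using measurable_component_singleton[of i "{..<n}" "\<lambda>_. M"] by simp

lemma integral_coordinate:
  fixes n :: nat and f :: "'a \<Rightarrow> real"
  assumes "i < n" "f \<in> borel_measurable M"
  shows "(\<integral>x. f (x i) \<partial>PiM {..<n} (\<lambda>_. M)) = (\<integral>y. f y \<partial>M)"
proof -
  interpret product_prob_space "\<lambda>_. M" "{..<n}" by (rule product_prob_space_const)
  have "(\<integral>y. f y \<partial>M) = (\<integral>y. f y \<partial>distr (PiM {..<n} (\<lambda>_. M)) M (\<lambda>x. x i))"
    using assms(1) by (simp add: PiM_component)
  also have "\<dots> = (\<integral>x. f (x i) \<partial>PiM {..<n} (\<lambda>_. M))"
    using integral_distr[OF measurable_coordinate[OF assms(1)], of f] assms(2) by simp
  finally show ?thesis ..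
qed

lemma integrable_coordinate:
  fixes n :: nat and f :: "'a \<Rightarrow> real"
  assumes "i < n" "integrable M f"
  shows "integrable (PiM {..<n} (\<lambda>_. M)) (\<lambda>x. f (x i))"
proof -
  interpret product_prob_space "\<lambda>_. M" "{..<n}" by (rule product_prob_space_const)
  have "integrable (distr (PiM {..<n} (\<lambda>_. M)) M (\<lambda>x. x i)) f"
    using assms by (simp add: PiM_component)
  then show ?thesis
    using integrable_distr_eq[OF measurable_coordinate[OF assms(1)], of f] assms(2) by simp
qed

lemma integral_insert_coordinate:
  fixes g :: "(nat \<Rightarrow> 'a) \<Rightarrow> real"
  assumes "integrable (PiM {..<Suc n} (\<lambda>_. M)) g"
  shows "(\<integral>x. g x \<partial>PiM {..<Suc n} (\<lambda>_. M))
    = (\<integral>x. (\<integral>y. g (x(n := y)) \<partial>M) \<partial>PiM {..<n} (\<lambda>_. M))"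
proof -
  interpret product_prob_space "\<lambda>_. M" "{..<n}" by (rule product_prob_space_const)
  have "{..<Suc n} = insert n {..<n}" by auto
  then show ?thesis using assms by (simp add: product_integral_insert)
qed

context
  fixes h :: "'a \<Rightarrow> real"
  assumes h_measurable [measurable]: "h \<in> borel_measurable M"
    and h_power4: "integrable M (\<lambda>y. h y ^ 4)"
    and h_mean: "(\<integral>y. h y \<partial>M) = 0"
begin

lemma integrable_power_upto_4: "j \<le> 4 \<Longrightarrow> integrable M (\<lambda>y. h y ^ j)"
proof -
  interpret prob_space M by (rule M)
  assume "j \<le> 4"
  then have pointwise: "norm (h y ^ j) \<le> norm (1 + h y ^ 4)" for y
    using abs_power_le_one_plus_abs_power[of j 4 "h y"] by (simp add: power_abs)
  have bound: "integrable M (\<lambda>y. 1 + h y ^ 4)" using h_power4 by simp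
  show ?thesis
  proof (rule Bochner_Integration.integrable_bound[OF bound])
    show "(\<lambda>y. h y ^ j) \<in> borel_measurable M" by measurable
  qed (rule AE_I2, rule pointwise)
qed

lemma integrable_iid_sum_power:
  fixes n :: nat
  assumes "j \<le> 4"
  shows "integrable (PiM {..<n} (\<lambda>_. M)) (\<lambda>x. (\<Sum>i<n. h (x i)) ^ j)"
proof -
  interpret P: prob_space "PiM {..<n} (\<lambda>_. M)" using M by (intro prob_space_PiM)
  have "integrable (PiM {..<n} (\<lambda>_. M)) (\<lambda>x. h (x i) ^ 4)" if "i < n" for i
    using integrable_coordinate[OF that h_power4] by simp
  then have bound: "integrable (PiM {..<n} (\<lambda>_. M)) (\<lambda>x. 1 + real n ^ 3 * (\<Sum>i<n. h (x i) ^ 4))"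
    by (intro Bochner_Integration.integrable_add integrable_mult_right
        Bochner_Integration.integrable_sum) auto
  have pointwise: "norm ((\<Sum>i<n. h (x i)) ^ j) \<le> norm (1 + real n ^ 3 * (\<Sum>i<n. h (x i) ^ 4))" for x
  proof -
    have "norm ((\<Sum>i<n. h (x i)) ^ j) \<le> 1 + (\<Sum>i<n. h (x i)) ^ 4"
      using abs_power_le_one_plus_abs_power[OF assms, of "\<Sum>i<n. h (x i)"]
      by (simp add: power_abs)
    also have "\<dots> \<le> 1 + real n ^ 3 * (\<Sum>i<n. h (x i) ^ 4)"
      using sum_power4_le[of "\<lambda>i. h (x i)" "{..<n}"] by simp
    also have "\<dots> \<le> norm (1 + real n ^ 3 * (\<Sum>i<n. h (x i) ^ 4))" by simp
    finally show ?thesis .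
  qed
  show ?thesis
  proof (rule Bochner_Integration.integrable_bound[OF bound])
    have "(\<lambda>x. h (x i)) \<in> borel_measurable (PiM {..<n} (\<lambda>_. M))" if "i < n" for i
      using measurable_compose[OF measurable_coordinate[OF that] h_measurable] .
    then show "(\<lambda>x. (\<Sum>i<n. h (x i)) ^ j) \<in> borel_measurable (PiM {..<n} (\<lambda>_. M))"
      by (intro borel_measurable_power borel_measurable_sum) auto
  qed (rule AE_I2, rule pointwise)
qed

lemma integral_shift_powers:
  "(\<integral>y. a + h y \<partial>M) = a"
  "(\<integral>y. (a + h y)\<^sup>2 \<partial>M) = a\<^sup>2 + (\<integral>y. (h y)\<^sup>2 \<partial>M)"
  "(\<integral>y. (a + h y) ^ 4 \<partial>M) = a ^ 4 + 6 * a\<^sup>2 * (\<integral>y. (h y)\<^sup>2 \<partial>M)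
     + 4 * a * (\<integral>y. h y ^ 3 \<partial>M) + (\<integral>y. h y ^ 4 \<partial>M)"
proof -
  interpret prob_space M by (rule M)
  have [simp]: "integrable M h" "integrable M (\<lambda>y. (h y)\<^sup>2)" "integrable M (\<lambda>y. h y ^ 3)"
    using integrable_power_upto_4[of 1] integrable_power_upto_4[of 2] integrable_power_upto_4[of 3]
    by simp_all
  have "(a + h y)\<^sup>2 = a\<^sup>2 + 2 * a * h y + (h y)\<^sup>2" for y
    by (simp add: power2_eq_square algebra_simps)
  moreover have
    "(a + h y) ^ 4 = a ^ 4 + 4 * a ^ 3 * h y + 6 * a\<^sup>2 * (h y)\<^sup>2 + 4 * a * h y ^ 3 + h y ^ 4" for y
    by (simp add: power2_eq_square power3_eq_cube power4_eq_xxxx algebra_simps)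
  ultimately show
    "(\<integral>y. a + h y \<partial>M) = a"
    "(\<integral>y. (a + h y)\<^sup>2 \<partial>M) = a\<^sup>2 + (\<integral>y. (h y)\<^sup>2 \<partial>M)"
    "(\<integral>y. (a + h y) ^ 4 \<partial>M) = a ^ 4 + 6 * a\<^sup>2 * (\<integral>y. (h y)\<^sup>2 \<partial>M)
       + 4 * a * (\<integral>y. h y ^ 3 \<partial>M) + (\<integral>y. h y ^ 4 \<partial>M)"
    using h_mean h_power4 by (simp_all add: prob_space)
qed

lemma sum_upd_last: "(\<Sum>i<Suc n. h ((x(n := y)) i)) = (\<Sum>i<n. h (x i)) + h y"
  by (simp add: sum.cong[of "{..<n}" "{..<n}" "\<lambda>i. h ((x(n := y)) i)"])

lemma integral_iid_sum:
  fixes n :: nat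
  shows "(\<integral>x. (\<Sum>i<n. h (x i)) \<partial>PiM {..<n} (\<lambda>_. M)) = 0"
proof (induction n)
  case (Suc n)
  have "integrable (PiM {..<Suc n} (\<lambda>_. M)) (\<lambda>x. \<Sum>i<Suc n. h (x i))"
    using integrable_iid_sum_power[of 1 "Suc n"]
    by (simp only: power_one_right order.refl one_le_numeral)
  then show ?case
    by (simp only: integral_insert_coordinate sum_upd_last integral_shift_powers Suc)
qed simp

lemma integral_iid_sum_sq:
  "(\<integral>x. (\<Sum>i<n. h (x i))\<^sup>2 \<partial>PiM {..<n} (\<lambda>_. M)) = real n * (\<integral>y. (h y)\<^sup>2 \<partial>M)"
proof (induction n)
  case (Suc n)
  interpret P: prob_space "PiM {..<n} (\<lambda>_. M)" using M by (intro prob_space_PiM)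
  have "(\<integral>x. (\<Sum>i<Suc n. h (x i))\<^sup>2 \<partial>PiM {..<Suc n} (\<lambda>_. M))
      = (\<integral>x. (\<Sum>i<n. h (x i))\<^sup>2 + (\<integral>y. (h y)\<^sup>2 \<partial>M) \<partial>PiM {..<n} (\<lambda>_. M))"
    using integrable_iid_sum_power[of 2 "Suc n"]
    by (simp only: integral_insert_coordinate sum_upd_last integral_shift_powers)
  also have "\<dots> = real (Suc n) * (\<integral>y. (h y)\<^sup>2 \<partial>M)"
    using integrable_iid_sum_power[of 2 n] Suc by (simp add: P.prob_space algebra_simps)
  finally show ?case .
qed simp

lemma integral_iid_sum_power4:
  "(\<integral>x. (\<Sum>i<n. h (x i)) ^ 4 \<partial>PiM {..<n} (\<lambda>_. M))
    = real n * (\<integral>y. h y ^ 4 \<partial>M) + 3 * real n * (real n - 1) * (\<integral>y. (h y)\<^sup>2 \<partial>M)\<^sup>2"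
proof (induction n)
  case (Suc n)
  interpret P: prob_space "PiM {..<n} (\<lambda>_. M)" using M by (intro prob_space_PiM)
  define e2 where "e2 = (\<integral>y. (h y)\<^sup>2 \<partial>M)"
  define e3 where "e3 = (\<integral>y. h y ^ 3 \<partial>M)"
  define e4 where "e4 = (\<integral>y. h y ^ 4 \<partial>M)"
  have "(\<integral>x. (\<Sum>i<Suc n. h (x i)) ^ 4 \<partial>PiM {..<Suc n} (\<lambda>_. M))
      = (\<integral>x. (\<Sum>i<n. h (x i)) ^ 4 + 6 * e2 * (\<Sum>i<n. h (x i))\<^sup>2 + 4 * e3 * (\<Sum>i<n. h (x i)) + e4
          \<partial>PiM {..<n} (\<lambda>_. M))"
    using integrable_iid_sum_power[of 4 "Suc n"]
    by (simp only: integral_insert_coordinate sum_upd_last integral_shift_powers e2_def e3_def e4_def)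
      (simp add: algebra_simps)
  also have "\<dots> = (real n * e4 + 3 * real n * (real n - 1) * e2\<^sup>2)
      + 6 * e2 * (real n * e2) + 4 * e3 * 0 + e4"
    using integrable_iid_sum_power[of 4 n] integrable_iid_sum_power[of 2 n]
      integrable_iid_sum_power[of 1 n]
    by (simp add: P.prob_space Suc[folded e2_def e4_def] integral_iid_sum
        integral_iid_sum_sq[folded e2_def])
  also have "\<dots> = real (Suc n) * e4 + 3 * real (Suc n) * real n * e2\<^sup>2"
    by (simp add: algebra_simps power2_eq_square)
  finally show ?case unfolding e2_def e4_def by simp
qed simp

lemma integrable_iid_mean_power:
  fixes n :: nat
  assumes "j \<le> 4"
  shows "integrable (PiM {..<n} (\<lambda>_. M)) (\<lambda>x. ((\<Sum>i<n. h (x i)) / n) ^ j)"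
  using integrable_iid_sum_power[OF assms, of n] by (simp add: power_divide)

lemma integral_iid_mean_sq:
  fixes n :: nat
  shows "(\<integral>x. ((\<Sum>i<n. h (x i)) / n)\<^sup>2 \<partial>PiM {..<n} (\<lambda>_. M)) = (\<integral>y. (h y)\<^sup>2 \<partial>M) / n"
  by (simp add: power_divide integral_iid_sum_sq) (simp add: power2_eq_square)

lemma integral_iid_mean_power4_le:
  "(\<integral>x. ((\<Sum>i<n. h (x i)) / n) ^ 4 \<partial>PiM {..<n} (\<lambda>_. M))
    \<le> ((\<integral>y. h y ^ 4 \<partial>M) + 3 * (\<integral>y. (h y)\<^sup>2 \<partial>M)\<^sup>2) / (real n)\<^sup>2"
proof -
  define e2 where "e2 = (\<integral>y. (h y)\<^sup>2 \<partial>M)"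
  define e4 where "e4 = (\<integral>y. h y ^ 4 \<partial>M)"
  have "0 \<le> e4" unfolding e4_def by (simp add: zero_le_even_power)
  have n: "real n \<le> real n ^ 2" "real n * (real n - 1) \<le> real n ^ 2"
    by (cases n; simp add: power2_eq_square)+
  have "real n * e4 \<le> real n ^ 2 * e4" using n(1) \<open>0 \<le> e4\<close> by (rule mult_right_mono)
  moreover have "real n * (real n - 1) * (3 * e2\<^sup>2) \<le> real n ^ 2 * (3 * e2\<^sup>2)"
    using n(2) by (rule mult_right_mono) simp
  ultimately have "real n * e4 + real n * (real n - 1) * (3 * e2\<^sup>2) \<le> real n ^ 2 * (e4 + 3 * e2\<^sup>2)"
    unfolding distrib_left by linarith
  then have "(real n * e4 + 3 * real n * (real n - 1) * e2\<^sup>2) / real n ^ 4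
      \<le> (real n ^ 2 * (e4 + 3 * e2\<^sup>2)) / real n ^ 4"
    by (intro divide_right_mono) (simp_all only: ac_simps zero_le_power of_nat_0_le_iff)
  also have "\<dots> = (e4 + 3 * e2\<^sup>2) / (real n)\<^sup>2"
    by (cases "n = 0") (simp_all add: power2_eq_square power4_eq_xxxx)
  finally show ?thesis
    by (simp add: power_divide integral_iid_sum_power4 flip: e2_def e4_def)
qed

lemma iid_mean_moments_le:
  obtains K where
    "\<And>n::nat. (\<integral>x. ((\<Sum>i<n. h (x i)) / n)\<^sup>2 \<partial>PiM {..<n} (\<lambda>_. M)) \<le> K / n"
    "\<And>n::nat. (\<integral>x. ((\<Sum>i<n. h (x i)) / n) ^ 4 \<partial>PiM {..<n} (\<lambda>_. M)) \<le> K / (real n)\<^sup>2"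
proof
  define e2 where "e2 = (\<integral>y. (h y)\<^sup>2 \<partial>M)"
  define e4 where "e4 = (\<integral>y. h y ^ 4 \<partial>M)"
  have e: "0 \<le> e2" "0 \<le> e4" unfolding e2_def e4_def by (simp_all add: zero_le_even_power)
  show "(\<integral>x. ((\<Sum>i<n. h (x i)) / n)\<^sup>2 \<partial>PiM {..<n} (\<lambda>_. M)) \<le> (e2 + e4 + 3 * e2\<^sup>2) / n" for n :: nat
    unfolding integral_iid_mean_sq e2_def[symmetric] using e by (intro divide_right_mono) auto
  show "(\<integral>x. ((\<Sum>i<n. h (x i)) / n) ^ 4 \<partial>PiM {..<n} (\<lambda>_. M)) \<le> (e2 + e4 + 3 * e2\<^sup>2) / (real n)\<^sup>2"
    for n :: nat
    using integral_iid_mean_power4_le[of n, folded e2_def e4_def] e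
    by (elim order_trans) (intro divide_right_mono; simp)
qed

end

end

abbreviation centered_normal :: "real \<Rightarrow> real measure" where
  "centered_normal \<sigma> \<equiv> density lborel (normal_density 0 \<sigma>)"

lemma prob_space_centered_normal: "0 < \<sigma> \<Longrightarrow> prob_space (centered_normal \<sigma>)"
  by (rule prob_space_normal_density)

lemma integrable_centered_normal_power:
  assumes "0 < \<sigma>"
  shows "integrable (centered_normal \<sigma>) (\<lambda>y. y ^ k)"
  using integrable_normal_moment[OF assms, of 0 k] by (subst integrable_density) auto

lemma integral_centered_normal_abs:
  assumes "0 < \<sigma>"
  shows "(\<integral>y. \<bar>y\<bar> \<partial>centered_normal \<sigma>) = \<sigma> * sqrt (2 / pi)"
  using integral_normal_moment_abs_odd[OF assms, of 0 0] by (subst integral_density) auto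

lemma integral_centered_normal_square:
  assumes "0 < \<sigma>"
  shows "(\<integral>y. y\<^sup>2 \<partial>centered_normal \<sigma>) = \<sigma>\<^sup>2"
  using integral_normal_moment_even[OF assms, of 0 1] by (subst integral_density) auto

lemma centered_normal_abs_dev_moments:
  assumes "0 < \<sigma>"
  defines "m \<equiv> \<sigma> * sqrt (2 / pi)"
  shows "integrable (centered_normal \<sigma>) (\<lambda>y. (\<bar>y\<bar> / m - 1) ^ 4)"
    and "(\<integral>y. \<bar>y\<bar> / m - 1 \<partial>centered_normal \<sigma>) = 0"
proof -
  interpret prob_space "centered_normal \<sigma>" using assms(1) by (rule prob_space_centered_normal)
  have m: "0 < m" using assms by simp
  have bound: "integrable (centered_normal \<sigma>) (\<lambda>y. 8 * (y ^ 4 / m ^ 4 + 1))"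
    using integrable_centered_normal_power[OF assms(1), of 4] by simp
  show "integrable (centered_normal \<sigma>) (\<lambda>y. (\<bar>y\<bar> / m - 1) ^ 4)"
  proof (rule Bochner_Integration.integrable_bound[OF bound])
    show "AE y in centered_normal \<sigma>. norm ((\<bar>y\<bar> / m - 1) ^ 4) \<le> norm (8 * (y ^ 4 / m ^ 4 + 1))"
      using power4_diff_le[of "\<bar>y\<bar> / m" 1 for y]
      by (intro AE_I2) (simp add: power_divide zero_le_even_power)
  qed simp
  have "integrable (centered_normal \<sigma>) (\<lambda>y. \<bar>y\<bar>)"
    using integrable_centered_normal_power[OF assms(1), of 1] by simp
  then show "(\<integral>y. \<bar>y\<bar> / m - 1 \<partial>centered_normal \<sigma>) = 0"
    using m assms prob_space by (simp add: integral_centered_normal_abs)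
qed

lemma centered_normal_square_dev_moments:
  assumes "0 < \<sigma>"
  shows "integrable (centered_normal \<sigma>) (\<lambda>y. (y\<^sup>2 / \<sigma>\<^sup>2 - 1) ^ 4)"
    and "(\<integral>y. y\<^sup>2 / \<sigma>\<^sup>2 - 1 \<partial>centered_normal \<sigma>) = 0"
proof -
  interpret prob_space "centered_normal \<sigma>" using assms by (rule prob_space_centered_normal)
  have bound: "integrable (centered_normal \<sigma>) (\<lambda>y. 8 * (y ^ 8 / \<sigma> ^ 8 + 1))"
    using integrable_centered_normal_power[OF assms, of 8] by simp
  show "integrable (centered_normal \<sigma>) (\<lambda>y. (y\<^sup>2 / \<sigma>\<^sup>2 - 1) ^ 4)"
  proof (rule Bochner_Integration.integrable_bound[OF bound])
    show "AE y in centered_normal \<sigma>. norm ((y\<^sup>2 / \<sigma>\<^sup>2 - 1) ^ 4) \<le> norm (8 * (y ^ 8 / \<sigma> ^ 8 + 1))"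
      using power4_diff_le[of "y\<^sup>2 / \<sigma>\<^sup>2" 1 for y]
      by (intro AE_I2) (simp add: power_divide zero_le_even_power flip: power_mult)
  qed simp
  have "integrable (centered_normal \<sigma>) (\<lambda>y. y\<^sup>2)"
    using integrable_centered_normal_power[OF assms, of 2] .
  then show "(\<integral>y. y\<^sup>2 / \<sigma>\<^sup>2 - 1 \<partial>centered_normal \<sigma>) = 0"
    using assms prob_space by (simp add: integral_centered_normal_square)
qed

lemma l1_l2_le:
  shows "l2 n x \<le> l1 n x" and "l1 n x \<le> sqrt (real n) * l2 n x"
proof -
  have l2: "l2 n x = L2_set x {..<n}" by (simp add: l2_def L2_set_def)
  show "l2 n x \<le> l1 n x" unfolding l2 l1_def by (rule L2_set_le_sum_abs)
  have "(\<Sum>i<n. \<bar>x i\<bar> * \<bar>1\<bar>) \<le> L2_set x {..<n} * L2_set (\<lambda>_. 1) {..<n}"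
    by (rule L2_set_mult_ineq)
  then show "l1 n x \<le> sqrt (real n) * l2 n x" by (simp add: l1_def l2 L2_set_constant mult.commute)
qed

lemma l2_nonneg: "0 \<le> l2 n x"
  by (simp add: l2_def sum_nonneg)

lemma l2_squared: "(l2 n x)\<^sup>2 = (\<Sum>i<n. (x i)\<^sup>2)"
  by (simp add: l2_def sum_nonneg)

lemma gauss_vec_eq: "gauss_vec n c = PiM {..<n} (\<lambda>_. centered_normal \<bar>c\<bar>)"
  by (simp add: gauss_vec_def)

lemma l1_l2_integrable:
  assumes "c \<noteq> 0"
  shows "integrable (gauss_vec n c) (l1 n)" "integrable (gauss_vec n c) (l2 n)"
    and "integrable (gauss_vec n c) (\<lambda>x. (l2 n x)\<^sup>2)"
proof -
  have \<sigma>: "0 < \<bar>c\<bar>" using assms by simp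
  have comp: "integrable (gauss_vec n c) (\<lambda>x. f (x i))"
    if "i < n" "integrable (centered_normal \<bar>c\<bar>) f" for f :: "real \<Rightarrow> real" and i
    unfolding gauss_vec_eq by (rule integrable_coordinate[OF prob_space_centered_normal[OF \<sigma>] that])
  show l1: "integrable (gauss_vec n c) (l1 n)"
    unfolding l1_def using comp integrable_centered_normal_power[OF \<sigma>, of 1]
    by (intro Bochner_Integration.integrable_sum) (simp add: integrable_abs)
  show "integrable (gauss_vec n c) (\<lambda>x. (l2 n x)\<^sup>2)"
    unfolding l2_squared using comp integrable_centered_normal_power[OF \<sigma>, of 2]
    by (intro Bochner_Integration.integrable_sum) simp
  show "integrable (gauss_vec n c) (l2 n)"
  proof (rule Bochner_Integration.integrable_bound[OF l1])
    show "l2 n \<in> borel_measurable (gauss_vec n c)" unfolding l2_def gauss_vec_def by measurable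
    show "AE x in gauss_vec n c. norm (l2 n x) \<le> norm (l1 n x)"
      using l1_l2_le(1) l2_nonneg
      by (intro AE_I2) (simp add: abs_of_nonneg order_trans[OF _ abs_ge_self])
  qed
qed

lemma gauss_vec_norm_expectations:
  assumes "c \<noteq> 0"
  shows "expect (gauss_vec n c) (l1 n) = n * (\<bar>c\<bar> * sqrt (2 / pi))"
    and "expect (gauss_vec n c) (\<lambda>x. (l2 n x)\<^sup>2) = n * c\<^sup>2"
proof -
  have \<sigma>: "0 < \<bar>c\<bar>" using assms by simp
  note P = prob_space_centered_normal[OF \<sigma>]
  have "expect (gauss_vec n c) (l1 n) = (\<Sum>i<n. \<integral>x. \<bar>x i\<bar> \<partial>gauss_vec n c)"
    unfolding expect_def l1_def gauss_vec_eq using integrable_centered_normal_power[OF \<sigma>, of 1]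
    by (intro Bochner_Integration.integral_sum integrable_coordinate[OF P]) (auto simp: integrable_abs)
  also have "\<dots> = (\<Sum>i<n. \<bar>c\<bar> * sqrt (2 / pi))"
    unfolding gauss_vec_eq using integral_centered_normal_abs[OF \<sigma>]
    by (intro sum.cong refl) (simp add: integral_coordinate[OF P])
  finally show "expect (gauss_vec n c) (l1 n) = n * (\<bar>c\<bar> * sqrt (2 / pi))" by simp
  have "expect (gauss_vec n c) (\<lambda>x. (l2 n x)\<^sup>2) = (\<Sum>i<n. \<integral>x. (x i)\<^sup>2 \<partial>gauss_vec n c)"
    unfolding expect_def l2_squared gauss_vec_eq using integrable_centered_normal_power[OF \<sigma>, of 2]
    by (intro Bochner_Integration.integral_sum integrable_coordinate[OF P]) auto
  also have "\<dots> = (\<Sum>i<n. c\<^sup>2)"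
  proof (intro sum.cong refl)
    have sq: "(\<lambda>y. y\<^sup>2) \<in> borel_measurable (centered_normal \<bar>c\<bar>)" by measurable
    show "(\<integral>x. (x i)\<^sup>2 \<partial>gauss_vec n c) = c\<^sup>2" if "i \<in> {..<n}" for i
      using integral_coordinate[OF P _ sq, of i n] that integral_centered_normal_square[OF \<sigma>]
      by (simp add: gauss_vec_eq)
  qed
  finally show "expect (gauss_vec n c) (\<lambda>x. (l2 n x)\<^sup>2) = n * c\<^sup>2" by simp
qed

lemma prob_space_gauss_vec: "c \<noteq> 0 \<Longrightarrow> prob_space (gauss_vec n c)"
  unfolding gauss_vec_eq by (intro prob_space_PiM prob_space_centered_normal) simp

lemma gauss_vec_l2_expectation_bounds:
  assumes "c \<noteq> 0"
  shows "sqrt n * (\<bar>c\<bar> * sqrt (2 / pi)) \<le> expect (gauss_vec n c) (l2 n)"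
    and "expect (gauss_vec n c) (l2 n) \<le> sqrt n * \<bar>c\<bar>"
proof -
  interpret prob_space "gauss_vec n c" using assms by (rule prob_space_gauss_vec)
  note int = l1_l2_integrable[OF assms]
  define b where "b = expect (gauss_vec n c) (l2 n)"
  have b0: "0 \<le> b" unfolding b_def expect_def by (simp add: l2_nonneg)
  have "n * (\<bar>c\<bar> * sqrt (2 / pi)) = (\<integral>x. l1 n x \<partial>gauss_vec n c)"
    using gauss_vec_norm_expectations(1)[OF assms, of n] by (simp add: expect_def)
  also have "\<dots> \<le> (\<integral>x. sqrt n * l2 n x \<partial>gauss_vec n c)"
    using int(1,2)[of n] l1_l2_le(2) by (intro integral_mono) auto
  finally have "sqrt n * (sqrt n * (\<bar>c\<bar> * sqrt (2 / pi))) \<le> sqrt n * b"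
    by (simp add: b_def expect_def mult.assoc[symmetric])
  then show "sqrt n * (\<bar>c\<bar> * sqrt (2 / pi)) \<le> b"
    using b0 by (cases "n = 0") auto
  have "0 \<le> variance (l2 n)" by (rule variance_positive)
  then have "b\<^sup>2 \<le> n * c\<^sup>2"
    using int gauss_vec_norm_expectations(2)[OF assms, of n]
    by (simp add: variance_eq b_def expect_def)
  then have "b \<le> sqrt (n * c\<^sup>2)" by (rule real_le_rsqrt)
  then show "b \<le> sqrt n * \<bar>c\<bar>" by (simp add: real_sqrt_mult)
qed

definition l1_dev :: "nat \<Rightarrow> real \<Rightarrow> (nat \<Rightarrow> real) \<Rightarrow> real" where
  "l1_dev n c x = l1 n x / (n * (\<bar>c\<bar> * sqrt (2 / pi))) - 1"

definition l2sq_dev :: "nat \<Rightarrow> real \<Rightarrow> (nat \<Rightarrow> real) \<Rightarrow> real" where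
  "l2sq_dev n c x = (l2 n x)\<^sup>2 / (n * c\<^sup>2) - 1"

definition norm_dev_bound :: "nat \<Rightarrow> real \<Rightarrow> (nat \<Rightarrow> real) \<Rightarrow> real" where
  "norm_dev_bound n c x =
     (l1_dev n c x)\<^sup>2 + (l2sq_dev n c x)\<^sup>2 + n * (l1_dev n c x ^ 4 + l2sq_dev n c x ^ 4)"

lemma l1_dev_eq_mean:
  assumes "0 < n" "c \<noteq> 0"
  shows "l1_dev n c x = (\<Sum>i<n. \<bar>x i\<bar> / (\<bar>c\<bar> * sqrt (2 / pi)) - 1) / n"
  using assms by (simp add: l1_dev_def l1_def sum_subtractf field_simps flip: sum_divide_distrib)

lemma l2sq_dev_eq_mean:
  assumes "0 < n" "c \<noteq> 0"
  shows "l2sq_dev n c x = (\<Sum>i<n. (x i)\<^sup>2 / c\<^sup>2 - 1) / n"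
  using assms by (simp add: l2sq_dev_def l2_squared sum_subtractf field_simps flip: sum_divide_distrib)

lemma gauss_vec_norm_dev_bound_integral_le:
  assumes "c \<noteq> 0"
  obtains K where
    "\<And>n. 1 \<le> n \<Longrightarrow> integrable (gauss_vec n c) (norm_dev_bound n c)"
    "\<And>n. 1 \<le> n \<Longrightarrow> (\<integral>x. norm_dev_bound n c x \<partial>gauss_vec n c) \<le> K / n"
proof -
  define h1 where "h1 y = \<bar>y\<bar> / (\<bar>c\<bar> * sqrt (2 / pi)) - 1" for y :: real
  define h2 where "h2 y = y\<^sup>2 / c\<^sup>2 - 1" for y :: real
  have \<sigma>: "0 < \<bar>c\<bar>" using assms by simp
  note P = prob_space_centered_normal[OF \<sigma>]
  have h1_meas: "h1 \<in> borel_measurable (centered_normal \<bar>c\<bar>)" unfolding h1_def by measurable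
  have h2_meas: "h2 \<in> borel_measurable (centered_normal \<bar>c\<bar>)" unfolding h2_def by measurable
  note h1_mom = centered_normal_abs_dev_moments[OF \<sigma>, folded h1_def]
  note h2_mom = centered_normal_square_dev_moments[OF \<sigma>, simplified, folded h2_def]
  obtain K1 where K1: "\<And>n::nat. (\<integral>x. ((\<Sum>i<n. h1 (x i)) / n)\<^sup>2 \<partial>gauss_vec n c) \<le> K1 / n"
      "\<And>n::nat. (\<integral>x. ((\<Sum>i<n. h1 (x i)) / n) ^ 4 \<partial>gauss_vec n c) \<le> K1 / (real n)\<^sup>2"
    using iid_mean_moments_le[OF P h1_meas h1_mom] unfolding gauss_vec_eq by metis
  obtain K2 where K2: "\<And>n::nat. (\<integral>x. ((\<Sum>i<n. h2 (x i)) / n)\<^sup>2 \<partial>gauss_vec n c) \<le> K2 / n"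
      "\<And>n::nat. (\<integral>x. ((\<Sum>i<n. h2 (x i)) / n) ^ 4 \<partial>gauss_vec n c) \<le> K2 / (real n)\<^sup>2"
    using iid_mean_moments_le[OF P h2_meas h2_mom] unfolding gauss_vec_eq by metis
  have "integrable (gauss_vec n c) (norm_dev_bound n c) \<and>
      (\<integral>x. norm_dev_bound n c x \<partial>gauss_vec n c) \<le> 2 * (K1 + K2) / n" if n: "1 \<le> n" for n
  proof -
    have dev: "norm_dev_bound n c x = ((\<Sum>i<n. h1 (x i)) / n)\<^sup>2 + ((\<Sum>i<n. h2 (x i)) / n)\<^sup>2
        + n * (((\<Sum>i<n. h1 (x i)) / n) ^ 4 + ((\<Sum>i<n. h2 (x i)) / n) ^ 4)" for x
      using l1_dev_eq_mean[of n c x] l2sq_dev_eq_mean[of n c x] n assms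
      by (simp add: norm_dev_bound_def h1_def h2_def)
    have int: "integrable (gauss_vec n c) (\<lambda>x. ((\<Sum>i<n. h1 (x i)) / n) ^ j)"
      "integrable (gauss_vec n c) (\<lambda>x. ((\<Sum>i<n. h2 (x i)) / n) ^ j)" if "j \<le> 4" for j
      using integrable_iid_mean_power[OF P h1_meas h1_mom that]
        integrable_iid_mean_power[OF P h2_meas h2_mom that]
      by (simp_all add: gauss_vec_eq)
    have "n * ((\<integral>x. ((\<Sum>i<n. h1 (x i)) / n) ^ 4 \<partial>gauss_vec n c)
          + (\<integral>x. ((\<Sum>i<n. h2 (x i)) / n) ^ 4 \<partial>gauss_vec n c))
        \<le> n * (K1 / (real n)\<^sup>2 + K2 / (real n)\<^sup>2)"
      by (intro mult_left_mono add_mono K1(2) K2(2)) simp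
    moreover have "K1 / n + K2 / n + n * (K1 / (real n)\<^sup>2 + K2 / (real n)\<^sup>2) = 2 * (K1 + K2) / n"
      by (simp add: power2_eq_square field_simps)
    ultimately show ?thesis
      unfolding dev using int[of 2] int[of 4] K1(1)[of n] K2(1)[of n] by simp
  qed
  then show thesis using that[of "2 * (K1 + K2)"] by blast
qed

lemma gauss_vec_ratio_sq_dev_le:
  assumes c: "c \<noteq> 0" and n: "1 \<le> n"
  defines "b \<equiv> expect (gauss_vec n c) (l2 n)"
  shows "(l1_hat n c x / l2_hat n c x - b / (sqrt n * \<bar>c\<bar>))\<^sup>2
      \<le> 16 * (1 + sqrt (pi / 2))\<^sup>2 * norm_dev_bound n c x"
    and "(l2_hat n c x / l1_hat n c x - sqrt n * \<bar>c\<bar> / b)\<^sup>2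
      \<le> pi / 2 * (16 * (1 + sqrt (pi / 2))\<^sup>2 * norm_dev_bound n c x)"
proof -
  define m where "m = \<bar>c\<bar> * sqrt (2 / pi)"
  have \<kappa>: "sqrt (pi / 2) = \<bar>c\<bar> / m" "pi / 2 = (\<bar>c\<bar> / m)\<^sup>2"
    using c by (simp_all add: m_def real_sqrt_divide power_divide)
  have m: "0 < m" "m \<le> \<bar>c\<bar>" using c pi_gt3 by (simp_all add: m_def mult_le_cancel_left1)
  have N: "1 \<le> real n" using n by simp
  have b: "sqrt n * m \<le> b" "b \<le> sqrt n * \<bar>c\<bar>"
    using gauss_vec_l2_expectation_bounds[OF c, of n] by (simp_all add: b_def m_def)
  have hat: "l1_hat n c x = l1 n x / (n * m)" "l2_hat n c x = l2 n x / b"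
    using gauss_vec_norm_expectations(1)[OF c, of n]
    by (simp_all add: l1_hat_def l2_hat_def b_def m_def)
  have dev: "l1_dev n c x = l1 n x / (n * m) - 1" "l2sq_dev n c x = (l2 n x)\<^sup>2 / (n * \<bar>c\<bar>\<^sup>2) - 1"
    by (simp_all add: l1_dev_def l2sq_dev_def m_def)
  show "(l1_hat n c x / l2_hat n c x - b / (sqrt n * \<bar>c\<bar>))\<^sup>2
      \<le> 16 * (1 + sqrt (pi / 2))\<^sup>2 * norm_dev_bound n c x"
    "(l2_hat n c x / l1_hat n c x - sqrt n * \<bar>c\<bar> / b)\<^sup>2
      \<le> pi / 2 * (16 * (1 + sqrt (pi / 2))\<^sup>2 * norm_dev_bound n c x)"
    unfolding hat norm_dev_bound_def \<kappa>(1) unfolding \<kappa>(2)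
    by (rule norm_ratio_sq_dev_le[OF N m l2_nonneg l1_l2_le b dev])+
qed

lemma gauss_vec_ratio_variances_le:
  assumes c: "c \<noteq> 0"
  obtains C where
    "\<And>n. 1 \<le> n \<Longrightarrow> var (gauss_vec n c) (\<lambda>x. l1_hat n c x / l2_hat n c x) \<le> C / n"
    "\<And>n. 1 \<le> n \<Longrightarrow> var (gauss_vec n c) (\<lambda>x. l2_hat n c x / l1_hat n c x) \<le> C / n"
proof -
  obtain K where K: "\<And>n. 1 \<le> n \<Longrightarrow> integrable (gauss_vec n c) (norm_dev_bound n c)"
    "\<And>n. 1 \<le> n \<Longrightarrow> (\<integral>x. norm_dev_bound n c x \<partial>gauss_vec n c) \<le> K / n"
    using gauss_vec_norm_dev_bound_integral_le[OF c] by blast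
  define A where "A = 16 * (1 + sqrt (pi / 2))\<^sup>2"
  define C where "C = max (A * K) (pi / 2 * (A * K))"
  have var_le: "var (gauss_vec n c) (\<lambda>x. l1_hat n c x / l2_hat n c x) \<le> A * K / n"
    "var (gauss_vec n c) (\<lambda>x. l2_hat n c x / l1_hat n c x) \<le> pi / 2 * (A * K) / n" if n: "1 \<le> n" for n
  proof -
    note P = prob_space_gauss_vec[OF c, of n]
    note dev = gauss_vec_ratio_sq_dev_le[OF c n, folded A_def]
    have D: "integrable (gauss_vec n c) (\<lambda>x. A * norm_dev_bound n c x)"
      "integrable (gauss_vec n c) (\<lambda>x. pi / 2 * (A * norm_dev_bound n c x))"
      using K(1)[OF n] by simp_all
    have meas: "(\<lambda>x. l1_hat n c x / l2_hat n c x) \<in> borel_measurable (gauss_vec n c)"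
      "(\<lambda>x. l2_hat n c x / l1_hat n c x) \<in> borel_measurable (gauss_vec n c)"
      unfolding l1_hat_def l2_hat_def l1_def l2_def gauss_vec_def by measurable
    have int_le: "A * (\<integral>x. norm_dev_bound n c x \<partial>gauss_vec n c) \<le> A * (K / n)"
      using K(2)[OF n] by (intro mult_left_mono) (simp_all add: A_def)
    have "var (gauss_vec n c) (\<lambda>x. l1_hat n c x / l2_hat n c x)
        \<le> (\<integral>x. A * norm_dev_bound n c x \<partial>gauss_vec n c)"
      by (rule var_le_integral_of_sq_dev_le[OF P meas(1) D(1) dev(1)])
    also have "\<dots> \<le> A * K / n" using int_le by simp
    finally show "var (gauss_vec n c) (\<lambda>x. l1_hat n c x / l2_hat n c x) \<le> A * K / n" .
    have "var (gauss_vec n c) (\<lambda>x. l2_hat n c x / l1_hat n c x)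
        \<le> (\<integral>x. pi / 2 * (A * norm_dev_bound n c x) \<partial>gauss_vec n c)"
      by (rule var_le_integral_of_sq_dev_le[OF P meas(2) D(2) dev(2)])
    also have "\<dots> = pi / 2 * (A * (\<integral>x. norm_dev_bound n c x \<partial>gauss_vec n c))" by simp
    also have "\<dots> \<le> pi / 2 * (A * (K / n))" by (rule mult_left_mono[OF int_le]) simp
    finally show "var (gauss_vec n c) (\<lambda>x. l2_hat n c x / l1_hat n c x) \<le> pi / 2 * (A * K) / n" by simp
  qed
  have C: "A * K / n \<le> C / n" "pi / 2 * (A * K) / n \<le> C / n" for n :: nat
    unfolding C_def by (intro divide_right_mono; simp)+
  show thesis
    by (rule that; rule order_trans[OF var_le(1) C(1)] order_trans[OF var_le(2) C(2)])
qed

theorem theorem2: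
  fixes c :: real
  assumes "c \<noteq> 0"
  shows "\<exists>C. \<forall>n::nat. n \<ge> 1 \<longrightarrow>
           max (var (gauss_vec n c) (\<lambda>x. l2_hat n c x / l1_hat n c x))
               (var (gauss_vec n c) (\<lambda>x. l1_hat n c x / l2_hat n c x))
           \<le> C / real n"
proof -
  obtain C where "\<And>n. 1 \<le> n \<Longrightarrow> var (gauss_vec n c) (\<lambda>x. l1_hat n c x / l2_hat n c x) \<le> C / n"
    "\<And>n. 1 \<le> n \<Longrightarrow> var (gauss_vec n c) (\<lambda>x. l2_hat n c x / l1_hat n c x) \<le> C / n"
    using gauss_vec_ratio_variances_le[OF assms] by blast
  then show ?thesis by (intro exI[of _ C]) simp
qed

end
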